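(* Let $n\ge3$ and let $\mathcal D_n$ be a minimal DFA with state set $Q_n=\{0,\dots,n-1\}$ and initial state $0$ recognizing a left ideal, with transition semigroup $T_n$. If every chain of states of $\mathcal D_n$ strictly ordered by $\prec$ has at most $2$ elements (i.e., a maximal-length such chain has length $2$), then $|T_n|\le n^{n-1}+n-1$ and $T_n$ is a subsemigroup of $S_n$.
   Context: A left ideal is a nonempty $L$ with $L=\Sigma^*L$. For a state $q$, $K_q$ is the language accepted from $q$; $p\prec q$ means $K_p\subsetneq K_q$. The transition semigroup is the set of state transformations induced by nonempty words. Notation: $(p\to q)$ maps $p$ to $q$ and fixes other states; $(Q_n\to q)$ is constant; $(p_0,\dots,p_{k-1})$ is a cyclic permutation fixing other states. $S_n$ is the transition semigroup of the DFA with states $Q_n$, initial $0$, final $\{n-1\}$, alphabet $\{a,b,c,d,e\}$, with $a\colon(1,2,\dots,n-1)$, $b\colon(1,2)$, $c\colon(n-1\to1)$, $d\colon(n-1\to0)$, $e\colon(Q_n\to1)$. *)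

theory Defs
  imports Main
begin

definition dfa_wf :: "nat \<Rightarrow> ('a \<Rightarrow> nat \<Rightarrow> nat) \<Rightarrow> nat set \<Rightarrow> bool" where
  "dfa_wf n \<delta> F \<longleftrightarrow> (\<forall>a q. q < n \<longrightarrow> \<delta> a q < n) \<and> F \<subseteq> {..<n}"

definition lang_from :: "('a \<Rightarrow> nat \<Rightarrow> nat) \<Rightarrow> nat set \<Rightarrow> nat \<Rightarrow> 'a list set" where
  "lang_from \<delta> F q = {w. fold \<delta> w q \<in> F}"

definition dfa_minimal :: "nat \<Rightarrow> ('a \<Rightarrow> nat \<Rightarrow> nat) \<Rightarrow> nat set \<Rightarrow> bool" where
  "dfa_minimal n \<delta> F \<longleftrightarrow>
     (\<forall>q<n. \<exists>w. fold \<delta> w 0 = q) \<and>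
     (\<forall>p<n. \<forall>q<n. p \<noteq> q \<longrightarrow> lang_from \<delta> F p \<noteq> lang_from \<delta> F q)"

definition left_ideal :: "'a list set \<Rightarrow> bool" where
  "left_ideal L \<longleftrightarrow> L \<noteq> {} \<and> L = {u @ v | u v. v \<in> L}"

definition state_prec :: "('a \<Rightarrow> nat \<Rightarrow> nat) \<Rightarrow> nat set \<Rightarrow> nat \<Rightarrow> nat \<Rightarrow> bool" where
  "state_prec \<delta> F p q \<longleftrightarrow> lang_from \<delta> F p \<subset> lang_from \<delta> F q"

definition word_trans :: "nat \<Rightarrow> ('a \<Rightarrow> nat \<Rightarrow> nat) \<Rightarrow> 'a list \<Rightarrow> nat \<Rightarrow> nat" where
  "word_trans n \<delta> w = (\<lambda>q. if q < n then fold \<delta> w q else q)"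

definition trans_semigroup :: "nat \<Rightarrow> ('a \<Rightarrow> nat \<Rightarrow> nat) \<Rightarrow> (nat \<Rightarrow> nat) set" where
  "trans_semigroup n \<delta> = {word_trans n \<delta> w | w. w \<noteq> []}"

datatype letter5 = La | Lb | Lc | Ld | Le

text \<open>The witness DFA: a:(1,2,...,n-1), b:(1,2), c:(n-1 -> 1), d:(n-1 -> 0), e:(Q_n -> 1).\<close>
fun delta_S :: "nat \<Rightarrow> letter5 \<Rightarrow> nat \<Rightarrow> nat" where
  "delta_S n La q = (if 1 \<le> q \<and> q < n - 1 then q + 1 else if q = n - 1 then 1 else q)"
| "delta_S n Lb q = (if q = 1 then 2 else if q = 2 then 1 else q)"
| "delta_S n Lc q = (if q = n - 1 then 1 else q)"
| "delta_S n Ld q = (if q = n - 1 then 0 else q)"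
| "delta_S n Le q = (if q < n then 1 else q)"

definition S_sg :: "nat \<Rightarrow> (nat \<Rightarrow> nat) set" where
  "S_sg n = trans_semigroup n (delta_S n)"

end

theory Submission
  imports Defs "HOL-Library.FuncSet" "HOL-Combinatorics.Transposition"
begin

text \<open>
  Since the language is a left ideal, K_0 is contained in every K_q, and inclusions of
  quotient languages are preserved by every word. If chains have length at most 2, every
  state q \<noteq> 0 is maximal for inclusion, so a word moving 0 to some q \<noteq> 0 sends every
  state to q. Hence each transformation either fixes 0 (there are n^(n-1) such maps of Q_n)
  or is one of the n-1 constants onto a nonzero state. All of these lie in S_n: the letters
  a and b generate the symmetric group on {1,...,n-1}, conjugating c and d by permutations
  gives every (p \<rightarrow> x) with p \<noteq> 0, and these generate all maps fixing 0.
\<close>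

subsection \<open>The transition monoid of a DFA\<close>

lemma fold_closed:
  assumes "\<forall>a q. q < n \<longrightarrow> \<delta> a q < n" and "q < n"
  shows "fold \<delta> w q < n"
  using assms(2) by (induction w arbitrary: q) (simp_all add: assms(1))

lemma word_trans_append:
  assumes "\<forall>a q. q < n \<longrightarrow> \<delta> a q < n"
  shows "word_trans n \<delta> (w @ v) = word_trans n \<delta> v \<circ> word_trans n \<delta> w"
  using fold_closed[OF assms] by (auto simp: word_trans_def fun_eq_iff)

lemma word_trans_singleton:
  assumes "\<And>q. n \<le> q \<Longrightarrow> \<delta> a q = q"
  shows "word_trans n \<delta> [a] = \<delta> a"
  using assms by (auto simp: word_trans_def fun_eq_iff)

definition trans_monoid :: "nat \<Rightarrow> ('a \<Rightarrow> nat \<Rightarrow> nat) \<Rightarrow> (nat \<Rightarrow> nat) set" where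
  "trans_monoid n \<delta> = {word_trans n \<delta> w | w. True}"

lemma word_trans_in_trans_monoid: "word_trans n \<delta> w \<in> trans_monoid n \<delta>"
  unfolding trans_monoid_def by blast

lemma word_trans_in_trans_semigroup:
  "w \<noteq> [] \<Longrightarrow> word_trans n \<delta> w \<in> trans_semigroup n \<delta>"
  unfolding trans_semigroup_def by blast

lemma id_in_trans_monoid: "id \<in> trans_monoid n \<delta>"
proof -
  have "word_trans n \<delta> [] = id"
    by (auto simp: word_trans_def)
  then show ?thesis
    by (metis word_trans_in_trans_monoid)
qed

lemma trans_monoid_comp:
  assumes "\<forall>a q. q < n \<longrightarrow> \<delta> a q < n"
    and "f \<in> trans_monoid n \<delta>" and "g \<in> trans_monoid n \<delta>"
  shows "g \<circ> f \<in> trans_monoid n \<delta>"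
proof -
  obtain w v where "f = word_trans n \<delta> w" "g = word_trans n \<delta> v"
    using assms(2,3) unfolding trans_monoid_def by blast
  then have "g \<circ> f = word_trans n \<delta> (w @ v)"
    using word_trans_append[OF assms(1)] by simp
  then show ?thesis
    by (simp add: word_trans_in_trans_monoid)
qed

lemma trans_monoid_funpow:
  assumes "\<forall>a q. q < n \<longrightarrow> \<delta> a q < n" and "f \<in> trans_monoid n \<delta>"
  shows "f ^^ k \<in> trans_monoid n \<delta>"
proof (induction k)
  case 0
  show ?case
    by (simp only: funpow.simps(1) id_in_trans_monoid)
next
  case (Suc k)
  then show ?case
    using trans_monoid_comp[OF assms(1) Suc.IH assms(2)] by (simp only: funpow.simps(2))
qed

lemma letter_in_trans_monoid:
  assumes "\<And>q. n \<le> q \<Longrightarrow> \<delta> a q = q"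
  shows "\<delta> a \<in> trans_monoid n \<delta>"
  using word_trans_in_trans_monoid[of n \<delta> "[a]"] by (simp add: word_trans_singleton assms)

subsection \<open>Maps of Q_n fixing 0\<close>

definition maps_fixing_zero :: "nat \<Rightarrow> (nat \<Rightarrow> nat) set" where
  "maps_fixing_zero n = {t. t 0 = 0 \<and> (\<forall>q<n. t q < n) \<and> (\<forall>q\<ge>n. t q = q)}"

definition const_map :: "nat \<Rightarrow> nat \<Rightarrow> nat \<Rightarrow> nat" where
  "const_map n c = (\<lambda>q. if q < n then c else q)"

lemma maps_fixing_zero_restrict:
  "inj_on (\<lambda>t. restrict t {1..<n}) (maps_fixing_zero n)"
  "(\<lambda>t. restrict t {1..<n}) ` maps_fixing_zero n \<subseteq> PiE {1..<n} (\<lambda>_. {..<n})"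
proof -
  show "inj_on (\<lambda>t. restrict t {1..<n}) (maps_fixing_zero n)"
  proof (rule inj_onI)
    fix t t' assume t: "t \<in> maps_fixing_zero n" "t' \<in> maps_fixing_zero n"
      and eq: "restrict t {1..<n} = restrict t' {1..<n}"
    have "t q = t' q" for q
    proof (cases "q \<in> {1..<n}")
      case True
      then show ?thesis
        using fun_cong[OF eq, of q] by simp
    next
      case False
      then have "q = 0 \<or> n \<le> q"
        by auto
      then show ?thesis
        using t by (auto simp: maps_fixing_zero_def)
    qed
    then show "t = t'" ..
  qed
  show "(\<lambda>t. restrict t {1..<n}) ` maps_fixing_zero n \<subseteq> PiE {1..<n} (\<lambda>_. {..<n})"
    by (auto simp: maps_fixing_zero_def)
qed

lemma finite_maps_fixing_zero: "finite (maps_fixing_zero n)"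
  using maps_fixing_zero_restrict by (rule inj_on_finite) (simp add: finite_PiE)

lemma card_maps_fixing_zero: "card (maps_fixing_zero n) \<le> n ^ (n - 1)"
proof -
  have "card (maps_fixing_zero n) \<le> card (PiE {1..<n} (\<lambda>_. {..<n}))"
    using maps_fixing_zero_restrict by (rule card_inj_on_le) (simp add: finite_PiE)
  then show ?thesis
    by (simp add: card_PiE)
qed

lemma conj_transpose:
  assumes "\<sigma>' \<circ> \<sigma> = id" and "\<sigma> \<circ> \<sigma>' = id"
  shows "\<sigma> \<circ> transpose a b \<circ> \<sigma>' = transpose (\<sigma> a) (\<sigma> b)"
proof
  fix r
  have inj: "\<sigma> u = \<sigma> v \<longleftrightarrow> u = v" for u v
    using pointfree_idE[OF assms(1)] by metis
  have r: "\<sigma> (\<sigma>' r) = r"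
    using pointfree_idE[OF assms(2)] .
  show "(\<sigma> \<circ> transpose a b \<circ> \<sigma>') r = transpose (\<sigma> a) (\<sigma> b) r"
    by (subst (2) r[symmetric]) (simp add: transpose_def inj)
qed

lemma conj_fun_upd_id:
  assumes "\<sigma>' \<circ> \<sigma> = id" and "\<sigma> \<circ> \<sigma>' = id"
  shows "\<sigma> \<circ> id(p := x) \<circ> \<sigma>' = id(\<sigma> p := \<sigma> x)"
proof
  fix r
  have inj: "\<sigma> u = \<sigma> v \<longleftrightarrow> u = v" for u v
    using pointfree_idE[OF assms(1)] by metis
  have r: "\<sigma> (\<sigma>' r) = r"
    using pointfree_idE[OF assms(2)] .
  have "\<sigma>' r = p \<longleftrightarrow> r = \<sigma> p"
    using inj[of "\<sigma>' r" p] by (simp add: r)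
  then show "(\<sigma> \<circ> id(p := x) \<circ> \<sigma>') r = (id(\<sigma> p := \<sigma> x)) r"
    using r by auto
qed

definition moved_points :: "nat \<Rightarrow> (nat \<Rightarrow> nat) \<Rightarrow> nat set" where
  "moved_points n t = {p \<in> {1..<n}. t p \<noteq> p}"

lemma moved_points_comp_transpose:
  assumes "t \<in> maps_fixing_zero n" and p: "p \<in> {1..<n}" "t p \<noteq> p"
    and unique: "\<forall>x<n. x \<noteq> p \<longrightarrow> t x \<noteq> t p"
  shows "t p \<in> {1..<n}"
    and "moved_points n (t \<circ> transpose p (t p)) \<subset> moved_points n t"
proof -
  have t: "t 0 = 0" "\<And>q. q < n \<Longrightarrow> t q < n"
    using assms(1) by (auto simp: maps_fixing_zero_def)
  show q: "t p \<in> {1..<n}"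
    using unique p t by (metis atLeastLessThan_iff less_one not_le_imp_less)
  have "t (t p) \<noteq> t p"
    using unique p q by auto
  then show "moved_points n (t \<circ> transpose p (t p)) \<subset> moved_points n t"
    using p q by (auto simp: moved_points_def transpose_def)
qed

text \<open>Induction on the number of moved points: either two points share the image of a
  moved point p, and t factors through id(p := x), or t is injective at p and composing
  with the transposition of p and t p creates a new fixed point.\<close>

lemma maps_fixing_zero_subset:
  assumes comp: "\<And>f g. f \<in> M \<Longrightarrow> g \<in> M \<Longrightarrow> g \<circ> f \<in> M"
    and "id \<in> M"
    and transp: "\<And>p q. p \<in> {1..<n} \<Longrightarrow> q \<in> {1..<n} \<Longrightarrow> transpose p q \<in> M"
    and upd: "\<And>p x. p \<in> {1..<n} \<Longrightarrow> x < n \<Longrightarrow> id(p := x) \<in> M"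
  shows "maps_fixing_zero n \<subseteq> M"
proof
  fix t assume "t \<in> maps_fixing_zero n"
  then show "t \<in> M"
  proof (induction "card (moved_points n t)" arbitrary: t rule: less_induct)
    case less
    have IH: "t' \<in> M" if "t' \<in> maps_fixing_zero n" "moved_points n t' \<subset> moved_points n t" for t'
      using less.hyps that psubset_card_mono[of "moved_points n t"]
      by (auto simp: moved_points_def)
    show ?case
    proof (cases "moved_points n t = {}")
      case True
      have "t q = q" for q
        using less.prems True
        by (cases "q = 0"; cases "q < n") (auto simp: maps_fixing_zero_def moved_points_def)
      then have "t = id"
        by (simp add: fun_eq_iff)
      then show ?thesis
        using \<open>id \<in> M\<close> by simp
    next
      case False
      then obtain p where p: "p \<in> {1..<n}" "t p \<noteq> p"
        by (auto simp: moved_points_def)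
      show ?thesis
      proof (cases "\<exists>x<n. x \<noteq> p \<and> t x = t p")
        case True
        then obtain x where x: "x < n" "x \<noteq> p" "t x = t p"
          by auto
        have "t = t(p := p) \<circ> id(p := x)"
          using x by (auto simp: fun_eq_iff)
        moreover have "t(p := p) \<in> M"
          using p less.prems by (intro IH) (auto simp: maps_fixing_zero_def moved_points_def)
        ultimately show ?thesis
          using comp upd[OF p(1) x(1)] by metis
      next
        case False
        let ?\<tau> = "transpose p (t p)"
        have q: "t p \<in> {1..<n}" and "moved_points n (t \<circ> ?\<tau>) \<subset> moved_points n t"
          using moved_points_comp_transpose[OF less.prems p] False by auto
        then have "t \<circ> ?\<tau> \<in> M"
          using p less.prems
          by (intro IH) (auto simp: maps_fixing_zero_def transpose_def)
        moreover have "t = (t \<circ> ?\<tau>) \<circ> ?\<tau>"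
          by (simp add: comp_assoc)
        ultimately show ?thesis
          using comp transp[OF p(1) q] by metis
      qed
    qed
  qed
qed

subsection \<open>Generators of S_n\<close>

abbreviation S_monoid :: "nat \<Rightarrow> (nat \<Rightarrow> nat) set" where
  "S_monoid n \<equiv> trans_monoid n (delta_S n)"

declare delta_S.simps [simp del]

lemma delta_S_closed: "3 \<le> n \<Longrightarrow> \<forall>a q. q < n \<longrightarrow> delta_S n a q < n"
proof (intro allI impI)
  fix a q assume "3 \<le> n" "q < n"
  then show "delta_S n a q < n"
    by (cases a) (auto simp: delta_S.simps)
qed

lemma S_monoid_comp:
  "3 \<le> n \<Longrightarrow> f \<in> S_monoid n \<Longrightarrow> g \<in> S_monoid n \<Longrightarrow> g \<circ> f \<in> S_monoid n"
  by (rule trans_monoid_comp[OF delta_S_closed])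

lemma S_monoid_conj:
  assumes "3 \<le> n" and "\<sigma> \<in> S_monoid n" "f \<in> S_monoid n" "\<sigma>' \<in> S_monoid n"
  shows "\<sigma> \<circ> f \<circ> \<sigma>' \<in> S_monoid n"
  using S_monoid_comp[OF assms(1) assms(4) S_monoid_comp[OF assms(1) assms(3,2)]] .

lemma delta_S_in_S_monoid: "3 \<le> n \<Longrightarrow> delta_S n a \<in> S_monoid n"
  by (rule letter_in_trans_monoid) (cases a; auto simp: delta_S.simps)

lemma delta_S_letters:
  "delta_S n Lb = transpose 1 2"
  "delta_S n Lc = id(n - 1 := 1)"
  "delta_S n Ld = id(n - 1 := 0)"
  "delta_S n Le = const_map n 1"
  by (auto simp: fun_eq_iff transpose_def const_map_def delta_S.simps)

lemma delta_S_La_funpow: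
  assumes "3 \<le> n" and "q \<in> {1..<n}"
  shows "(delta_S n La ^^ k) q = (q - 1 + k) mod (n - 1) + 1"
proof (induction k)
  case 0
  have "q - 1 < n - 1"
    using assms by auto
  then show ?case
    using assms by simp
next
  case (Suc k)
  define m where "m = (q - 1 + k) mod (n - 1)"
  have "m < n - 1"
    using assms(1) by (simp add: m_def)
  have "(delta_S n La ^^ Suc k) q = delta_S n La (Suc m)"
    using Suc.IH by (simp add: m_def)
  also have "\<dots> = (if Suc m = n - 1 then 0 else Suc m) + 1"
    using \<open>m < n - 1\<close> by (simp add: delta_S.simps)
  also have "\<dots> = (q - 1 + Suc k) mod (n - 1) + 1"
    by (simp add: m_def mod_Suc)
  finally show ?case .
qed

lemma delta_S_La_period:
  assumes "3 \<le> n"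
  shows "delta_S n La ^^ (n - 1) = id"
proof
  fix q
  show "(delta_S n La ^^ (n - 1)) q = id q"
  proof (cases "q \<in> {1..<n}")
    case True
    have "(q - 1 + (n - 1)) mod (n - 1) = (q - 1) mod (n - 1)"
      by (rule mod_add_self2)
    also have "\<dots> = q - 1"
      using True by (intro mod_less) auto
    finally have "(delta_S n La ^^ (n - 1)) q = q - 1 + 1"
      by (simp only: delta_S_La_funpow[OF assms True])
    then show ?thesis
      using True by simp
  next
    case False
    then have "delta_S n La q = q"
      using assms by (auto simp: delta_S.simps)
    then have "(delta_S n La ^^ k) q = q" for k
      by (induction k) simp_all
    then show ?thesis
      by simp
  qed
qed

lemma adjacent_transpose_in_S_monoid:
  assumes "3 \<le> n" and "k + 2 < n"
  shows "transpose (k + 1) (k + 2) \<in> S_monoid n"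
proof -
  let ?a = "delta_S n La"
  have "n - 1 - k + k = n - 1" "k + (n - 1 - k) = n - 1"
    using assms by auto
  then have inv: "?a ^^ (n - 1 - k) \<circ> ?a ^^ k = id" "?a ^^ k \<circ> ?a ^^ (n - 1 - k) = id"
    by (simp_all only: funpow_add[symmetric] delta_S_La_period[OF assms(1)])
  have "(?a ^^ k) 1 = k + 1" "(?a ^^ k) 2 = k + 2"
    using delta_S_La_funpow[OF assms(1)] assms by simp_all
  then have conj: "?a ^^ k \<circ> transpose 1 2 \<circ> ?a ^^ (n - 1 - k) = transpose (k + 1) (k + 2)"
    using conj_transpose[OF inv] by simp
  have powers: "?a ^^ j \<in> S_monoid n" for j
    using assms(1) by (intro trans_monoid_funpow delta_S_closed delta_S_in_S_monoid)
  have "transpose 1 2 \<in> S_monoid n"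
    using delta_S_in_S_monoid[OF assms(1), of Lb] by (simp add: delta_S_letters)
  then have "?a ^^ k \<circ> transpose 1 2 \<circ> ?a ^^ (n - 1 - k) \<in> S_monoid n"
    using powers by (intro S_monoid_comp[OF assms(1)])
  then show ?thesis
    by (simp only: conj)
qed

lemma transpose_in_S_monoid:
  assumes "3 \<le> n" and "p \<in> {1..<n}" and "q \<in> {1..<n}"
  shows "transpose p q \<in> S_monoid n"
proof -
  have less: "transpose p q \<in> S_monoid n" if "1 \<le> p" "Suc p \<le> q" "q < n" for p q
    using that(2,3)
  proof (induction q rule: nat_induct_at_least)
    case base
    then show ?case
      using adjacent_transpose_in_S_monoid[OF assms(1), of "p - 1"] that(1) by simp
  next
    case (Suc q)
    have eq: "transpose (Suc q) q \<circ> transpose q p \<circ> transpose (Suc q) q = transpose p (Suc q)"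
      using Suc.hyps by (subst transpose_commute[of p]) (intro transpose_comp_triple; auto)
    have "transpose q (Suc q) \<in> S_monoid n"
      using adjacent_transpose_in_S_monoid[OF assms(1), of "q - 1"] Suc that(1) by simp
    then have \<tau>: "transpose (Suc q) q \<in> S_monoid n"
      by (subst transpose_commute)
    have "transpose p q \<in> S_monoid n"
      using Suc by simp
    then have "transpose q p \<in> S_monoid n"
      by (subst transpose_commute)
    from S_monoid_conj[OF assms(1) \<tau> this \<tau>] show ?case
      unfolding eq .
  qed
  consider "p < q" | "p = q" | "q < p"
    by linarith
  then show ?thesis
  proof cases
    case 1
    then show ?thesis
      using less assms by simp
  next
    case 2
    then show ?thesis
      by (simp add: id_in_trans_monoid)
  next
    case 3
    then have "transpose q p \<in> S_monoid n"
      using less assms by simp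
    then show ?thesis
      by (subst transpose_commute)
  qed
qed

lemma fun_upd_last_in_S_monoid:
  assumes "3 \<le> n" and "x < n - 1"
  shows "id(n - 1 := x) \<in> S_monoid n"
proof (cases "x = 0")
  case True
  then show ?thesis
    using delta_S_in_S_monoid[of n Ld] assms(1) by (simp add: delta_S_letters)
next
  case False
  let ?\<tau> = "transpose 1 x"
  have eq: "?\<tau> \<circ> id(n - 1 := 1) \<circ> ?\<tau> = id(n - 1 := x)"
    using conj_fun_upd_id[of ?\<tau> ?\<tau> "n - 1" 1] assms by simp
  have \<tau>: "?\<tau> \<in> S_monoid n"
    using False assms by (intro transpose_in_S_monoid) auto
  have "id(n - 1 := 1) \<in> S_monoid n"
    using delta_S_in_S_monoid[of n Lc] assms(1) by (simp add: delta_S_letters)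
  from S_monoid_conj[OF assms(1) \<tau> this \<tau>] show ?thesis
    unfolding eq .
qed

lemma fun_upd_in_S_monoid:
  assumes "3 \<le> n" and "p \<in> {1..<n}" and "x < n"
  shows "id(p := x) \<in> S_monoid n"
proof (cases "x = p")
  case True
  then have "id(p := x) = id"
    by (simp add: fun_eq_iff)
  then show ?thesis
    by (simp add: id_in_trans_monoid)
next
  case False
  let ?\<tau> = "transpose p (n - 1)"
  have eq: "?\<tau> \<circ> id(n - 1 := ?\<tau> x) \<circ> ?\<tau> = id(p := x)"
    using conj_fun_upd_id[of ?\<tau> ?\<tau> "n - 1" "?\<tau> x"] by simp
  have \<tau>: "?\<tau> \<in> S_monoid n"
    using assms by (intro transpose_in_S_monoid) auto
  have "?\<tau> x < n - 1"
    using assms False by (auto simp: transpose_def)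
  then have "id(n - 1 := ?\<tau> x) \<in> S_monoid n"
    using fun_upd_last_in_S_monoid assms(1) by blast
  from S_monoid_conj[OF assms(1) \<tau> this \<tau>] show ?thesis
    unfolding eq .
qed

lemma maps_fixing_zero_subset_S_monoid: "3 \<le> n \<Longrightarrow> maps_fixing_zero n \<subseteq> S_monoid n"
  by (rule maps_fixing_zero_subset)
    (simp_all add: S_monoid_comp id_in_trans_monoid transpose_in_S_monoid fun_upd_in_S_monoid)

lemma const_map_in_S_monoid:
  assumes "3 \<le> n" and "c \<in> {1..<n}"
  shows "const_map n c \<in> S_monoid n"
proof -
  have "const_map n c = id(1 := c) \<circ> delta_S n Le"
    using assms by (auto simp: fun_eq_iff const_map_def delta_S.simps)
  moreover have "id(1 := c) \<in> S_monoid n"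
    using assms by (intro fun_upd_in_S_monoid) auto
  ultimately show ?thesis
    using S_monoid_comp[OF assms(1) delta_S_in_S_monoid[OF assms(1)]] by simp
qed

lemma S_monoid_subset_S_sg:
  assumes "3 \<le> n"
  shows "S_monoid n \<subseteq> S_sg n"
proof
  fix t assume "t \<in> S_monoid n"
  then obtain w where t: "t = word_trans n (delta_S n) w"
    unfolding trans_monoid_def by blast
  have "word_trans n (delta_S n) [Lb, Lb] = transpose 1 2 \<circ> transpose 1 2"
    using word_trans_append[OF delta_S_closed[OF assms], of "[Lb]" "[Lb]"] assms
    by (simp add: word_trans_singleton delta_S_letters)
  then have "word_trans n (delta_S n) [] = word_trans n (delta_S n) [Lb, Lb]"
    by (simp add: word_trans_def fun_eq_iff)
  then have "t = word_trans n (delta_S n) (if w = [] then [Lb, Lb] else w)"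
    using t by simp
  then show "t \<in> S_sg n"
    unfolding S_sg_def by (simp add: word_trans_in_trans_semigroup)
qed

subsection \<open>Left ideals whose chains of quotients have length at most 2\<close>

lemma lang_from_fold_mono:
  assumes "lang_from \<delta> F p \<subseteq> lang_from \<delta> F r"
  shows "lang_from \<delta> F (fold \<delta> w p) \<subseteq> lang_from \<delta> F (fold \<delta> w r)"
proof
  fix v assume "v \<in> lang_from \<delta> F (fold \<delta> w p)"
  then have "w @ v \<in> lang_from \<delta> F p"
    by (simp add: lang_from_def)
  then have "w @ v \<in> lang_from \<delta> F r"
    using assms ..
  then show "v \<in> lang_from \<delta> F (fold \<delta> w r)"
    by (simp add: lang_from_def)
qed

lemma left_ideal_lang_from_subset:
  assumes "left_ideal (lang_from \<delta> F q)"
  shows "lang_from \<delta> F q \<subseteq> lang_from \<delta> F (fold \<delta> u q)"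
proof
  fix v assume "v \<in> lang_from \<delta> F q"
  then have "u @ v \<in> lang_from \<delta> F q"
    using assms unfolding left_ideal_def by blast
  then show "v \<in> lang_from \<delta> F (fold \<delta> u q)"
    by (simp add: lang_from_def)
qed

locale short_chain_left_ideal_dfa =
  fixes n :: nat and \<delta> :: "'a \<Rightarrow> nat \<Rightarrow> nat" and F :: "nat set"
  assumes nonempty: "0 < n"
    and wf: "dfa_wf n \<delta> F"
    and minimal: "dfa_minimal n \<delta> F"
    and ideal: "left_ideal (lang_from \<delta> F 0)"
    and short_chains: "\<forall>xs. set xs \<subseteq> {..<n} \<and> sorted_wrt (state_prec \<delta> F) xs \<longrightarrow> length xs \<le> 2"
begin

lemma closed: "\<forall>a q. q < n \<longrightarrow> \<delta> a q < n"
  using wf by (simp add: dfa_wf_def)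

lemma initial_lang_subset:
  assumes "q < n"
  shows "lang_from \<delta> F 0 \<subseteq> lang_from \<delta> F q"
proof -
  obtain u where "fold \<delta> u 0 = q"
    using minimal assms unfolding dfa_minimal_def by blast
  then show ?thesis
    using left_ideal_lang_from_subset[OF ideal, of u] by simp
qed

lemma nonzero_state_maximal:
  assumes "q \<in> {1..<n}" and "r < n" and "lang_from \<delta> F q \<subseteq> lang_from \<delta> F r"
  shows "r = q"
proof (rule ccontr)
  assume "r \<noteq> q"
  then have qr: "state_prec \<delta> F q r"
    using minimal assms unfolding dfa_minimal_def state_prec_def by auto
  have "lang_from \<delta> F 0 \<noteq> lang_from \<delta> F q"
    using minimal nonempty assms(1) unfolding dfa_minimal_def by auto
  then have zq: "state_prec \<delta> F 0 q"
    using initial_lang_subset assms(1) unfolding state_prec_def by auto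
  then have "state_prec \<delta> F 0 r"
    using qr unfolding state_prec_def by blast
  then have "sorted_wrt (state_prec \<delta> F) [0, q, r]"
    using qr zq by simp
  moreover have "set [0, q, r] \<subseteq> {..<n}"
    using nonempty assms by auto
  ultimately have "length [0, q, r] \<le> 2"
    using short_chains by blast
  then show False
    by simp
qed

lemma fold_fixes_zero_or_constant:
  assumes "fold \<delta> w 0 \<noteq> 0" and "r < n"
  shows "fold \<delta> w r = fold \<delta> w 0"
proof (rule nonzero_state_maximal)
  show "fold \<delta> w 0 \<in> {1..<n}"
    using assms(1) fold_closed[OF closed nonempty] by auto
  show "fold \<delta> w r < n"
    using fold_closed[OF closed assms(2)] .
  show "lang_from \<delta> F (fold \<delta> w 0) \<subseteq> lang_from \<delta> F (fold \<delta> w r)"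
    using lang_from_fold_mono initial_lang_subset[OF assms(2)] .
qed

lemma trans_semigroup_subset:
  "trans_semigroup n \<delta> \<subseteq> maps_fixing_zero n \<union> const_map n ` {1..<n}"
proof
  fix t assume "t \<in> trans_semigroup n \<delta>"
  then obtain w where t: "t = word_trans n \<delta> w"
    unfolding trans_semigroup_def by blast
  show "t \<in> maps_fixing_zero n \<union> const_map n ` {1..<n}"
  proof (cases "fold \<delta> w 0 = 0")
    case True
    then have "t \<in> maps_fixing_zero n"
      using fold_closed[OF closed] nonempty by (auto simp: t word_trans_def maps_fixing_zero_def)
    then show ?thesis ..
  next
    case False
    have "t r = const_map n (fold \<delta> w 0) r" for r
      using fold_fixes_zero_or_constant[OF False, of r] by (simp add: t word_trans_def const_map_def)
    then have "t = const_map n (fold \<delta> w 0)" ..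
    moreover have "fold \<delta> w 0 \<in> {1..<n}"
      using False fold_closed[OF closed nonempty] by auto
    ultimately show ?thesis
      by blast
  qed
qed

end

theorem lemma4:
  fixes n :: nat and \<delta> :: "'a::finite \<Rightarrow> nat \<Rightarrow> nat" and F :: "nat set"
  assumes "n \<ge> 3"
    and "dfa_wf n \<delta> F"
    and "dfa_minimal n \<delta> F"
    and "left_ideal (lang_from \<delta> F 0)"
    and "\<forall>xs. set xs \<subseteq> {..<n} \<and> sorted_wrt (state_prec \<delta> F) xs \<longrightarrow> length xs \<le> 2"
  shows "card (trans_semigroup n \<delta>) \<le> n ^ (n - 1) + n - 1
         \<and> trans_semigroup n \<delta> \<subseteq> S_sg n"
proof -
  interpret short_chain_left_ideal_dfa n \<delta> F
    using assms by unfold_locales auto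
  let ?U = "maps_fixing_zero n \<union> const_map n ` {1..<n}"
  have "card (trans_semigroup n \<delta>) \<le> card ?U"
    using trans_semigroup_subset finite_maps_fixing_zero by (intro card_mono) auto
  also have "\<dots> \<le> card (maps_fixing_zero n) + card (const_map n ` {1..<n})"
    by (rule card_Un_le)
  also have "\<dots> \<le> n ^ (n - 1) + (n - 1)"
    using card_maps_fixing_zero card_image_le[of "{1..<n}" "const_map n"] by (intro add_mono) auto
  finally have "card (trans_semigroup n \<delta>) \<le> n ^ (n - 1) + n - 1"
    using assms(1) by simp
  moreover have "?U \<subseteq> S_monoid n"
    using maps_fixing_zero_subset_S_monoid[OF assms(1)] const_map_in_S_monoid[OF assms(1)] by auto
  then have "trans_semigroup n \<delta> \<subseteq> S_sg n"
    using trans_semigroup_subset S_monoid_subset_S_sg[OF assms(1)] by (meson subset_trans)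
  ultimately show ?thesis ..
qed

end
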